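(* Let $\psi(u,v)$ be a satisfiable conjunction of difference constraints between two integer variables $u,v$ such that every pair satisfying $\psi$ has $u\le v$ and $\psi(m,m)$ holds for every integer $m$ (i.e. $\psi$ contains $u\le v$ but no conjunct $u\le v-c$ with $c>0$). Let $n\ge3$. Then $\exists S_3,\dots,S_{n-1}.\ \bigwedge_{2\le i\le n-1}\Big(S_i=S_{i+1}\cup\{\min(S_i)\}\wedge\max(S_i)=\max(S_{i+1})\wedge\psi(\min(S_i),\min(S_{i+1}))\Big)$ is equivalent to $S_n\neq\emptyset\wedge S_n\subseteq S_2\wedge|S_2\setminus S_n|\le n-2\wedge\big(S_2\setminus S_n\neq\emptyset\rightarrow\max(S_2\setminus S_n)<\min(S_n)\big)\wedge\forall y,z.\ \big(\mathsf{succ}((S_2\setminus S_n)\cup\{\min(S_n)\},y,z)\rightarrow\psi(y,z)\big)$.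
   Context: Set variables range over finite subsets of $\mathbb{Z}$, integer variables over $\mathbb{Z}$; $\min,\max$ of the empty set are undefined and atoms containing undefined terms are false. $\mathsf{succ}(S,x,y)$ abbreviates $x\in S\wedge y\in S\wedge x<y\wedge\forall z\in S.\,(z\le x\vee y\le z)$. $|\cdot|$ is cardinality. *)

theory Defs
  imports Main
begin

datatype var2 = U | V

text \<open>A difference constraint (x, y, c) stands for x - y \<le> c, where x, y range over the
  two integer variables u, v. A conjunction of difference constraints is a finite list of them.\<close>
type_synonym dconstr = "var2 \<times> var2 \<times> int"

fun val2 :: "int \<Rightarrow> int \<Rightarrow> var2 \<Rightarrow> int" where
  "val2 u v U = u"
| "val2 u v V = v"

definition holds_conj :: "dconstr list \<Rightarrow> int \<Rightarrow> int \<Rightarrow> bool" where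
  "holds_conj cs u v \<longleftrightarrow> (\<forall>(x, y, c) \<in> set cs. val2 u v x - val2 u v y \<le> c)"

definition succ_in :: "int set \<Rightarrow> int \<Rightarrow> int \<Rightarrow> bool" where
  "succ_in S x y \<longleftrightarrow> x \<in> S \<and> y \<in> S \<and> x < y \<and> (\<forall>z\<in>S. z \<le> x \<or> y \<le> z)"

end

theory Submission
  imports Defs
begin

text \<open>Each step of the chain either keeps the set or removes its minimum (preserving the maximum
  is then automatic), so the chain is determined by which minima are removed: the removed
  elements form an initial segment \<open>S\<^sub>2 - S\<^sub>n\<close> of \<open>S\<^sub>2\<close> lying below \<open>S\<^sub>n\<close>, of size at most \<open>n - 2\<close>,
  and \<open>\<psi>\<close> must hold between consecutive removed elements and from the last one to \<open>min S\<^sub>n\<close>.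
  Idle steps cost nothing because \<open>\<psi>(m, m)\<close> holds; this is the only property of \<open>\<psi>\<close> used.\<close>

lemma chain_from_iff_relpowp:
  "(\<exists>S. S a = x \<and> S (a + k) = y \<and> (\<forall>i\<in>{a..a + k}. Q (S i)) \<and>
        (\<forall>i\<in>{a..<a + k}. P (S i) (S (Suc i))))
   \<longleftrightarrow> Q x \<and> ((\<lambda>u v. P u v \<and> Q v) ^^ k) x y"
proof
  assume "\<exists>S. S a = x \<and> S (a + k) = y \<and> (\<forall>i\<in>{a..a + k}. Q (S i)) \<and>
        (\<forall>i\<in>{a..<a + k}. P (S i) (S (Suc i)))"
  then obtain S where S: "S a = x" "S (a + k) = y" "\<forall>i\<in>{a..a + k}. Q (S i)"
    "\<forall>i\<in>{a..<a + k}. P (S i) (S (Suc i))" by blast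
  have "\<forall>i<k. P (S (a + i)) (S (a + Suc i)) \<and> Q (S (a + Suc i))"
    using S(3,4) by auto
  then show "Q x \<and> ((\<lambda>u v. P u v \<and> Q v) ^^ k) x y"
    unfolding relpowp_fun_conv using S(1-3) by (intro conjI exI[of _ "\<lambda>i. S (a + i)"]) auto
next
  assume "Q x \<and> ((\<lambda>u v. P u v \<and> Q v) ^^ k) x y"
  then obtain f where Qx: "Q x" and f: "f 0 = x" "f k = y" "\<forall>i<k. P (f i) (f (Suc i)) \<and> Q (f (Suc i))"
    unfolding relpowp_fun_conv by blast
  have "Q (f j)" if "j \<le> k" for j
    using that Qx f by (cases j) auto
  then show "\<exists>S. S a = x \<and> S (a + k) = y \<and> (\<forall>i\<in>{a..a + k}. Q (S i)) \<and>
        (\<forall>i\<in>{a..<a + k}. P (S i) (S (Suc i)))"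
    using f by (intro exI[of _ "\<lambda>i. f (i - a)"]) (auto simp: Suc_diff_le)
qed

definition peel_step :: "dconstr list \<Rightarrow> int set \<Rightarrow> int set \<Rightarrow> bool" where
  "peel_step cs A C \<longleftrightarrow> C \<noteq> {} \<and> A = insert (Min A) C \<and> holds_conj cs (Min A) (Min C)"

lemma chain_condition_iff_peel_step:
  assumes "finite C"
  shows "((A \<noteq> {} \<and> A = C \<union> {Min A}) \<and> (A \<noteq> {} \<and> C \<noteq> {} \<and> Max A = Max C) \<and>
          (A \<noteq> {} \<and> C \<noteq> {} \<and> holds_conj cs (Min A) (Min C))) \<longleftrightarrow> peel_step cs A C"
proof
  assume "peel_step cs A C"
  then have ne: "C \<noteq> {}" and A: "A = insert (Min A) C"
    unfolding peel_step_def by auto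
  have "Min A \<le> Max C"
    using A ne assms by (metis Max_in Min_le finite_insert insertCI)
  then have "Max A = Max C"
    using A ne assms by (metis Max_insert max.absorb2)
  then show "(A \<noteq> {} \<and> A = C \<union> {Min A}) \<and> (A \<noteq> {} \<and> C \<noteq> {} \<and> Max A = Max C) \<and>
          (A \<noteq> {} \<and> C \<noteq> {} \<and> holds_conj cs (Min A) (Min C))"
    using \<open>peel_step cs A C\<close> unfolding peel_step_def by auto
qed (auto simp: peel_step_def)

lemma succ_in_insert_below:
  assumes T: "finite T" "T \<noteq> {}" and below: "\<forall>t\<in>T. m < t"
  shows "succ_in (insert m T) y z \<longleftrightarrow> (y = m \<and> z = Min T) \<or> succ_in T y z"
proof -
  have "Min T \<in> T" "\<forall>t\<in>T. Min T \<le> t"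
    using T by auto
  then show ?thesis
    using below unfolding succ_in_def by (smt (verit) insert_iff)
qed

lemma Min_diff_union_Min:
  assumes "finite C" "B \<subseteq> C" "B \<noteq> {}"
  shows "Min ((C - B) \<union> {Min B}) = Min C"
proof (rule Min_eqI)
  have "finite B"
    using assms finite_subset by blast
  then have "Min B \<in> B" "\<forall>b\<in>B. Min B \<le> b"
    using assms by auto
  then show "\<And>x. x \<in> (C - B) \<union> {Min B} \<Longrightarrow> Min C \<le> x"
    using assms by auto
  show "Min C \<in> (C - B) \<union> {Min B}"
    using assms \<open>\<forall>b\<in>B. Min B \<le> b\<close> \<open>Min B \<in> B\<close>
    by (metis DiffI Min_in Min_le UnI1 UnI2 antisym empty_iff insertI1 subsetD subset_empty)
qed (use assms in auto)

definition peels_to :: "dconstr list \<Rightarrow> nat \<Rightarrow> int set \<Rightarrow> int set \<Rightarrow> bool" where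
  "peels_to cs k A B \<longleftrightarrow> B \<noteq> {} \<and> B \<subseteq> A \<and> card (A - B) \<le> k \<and>
     (A - B \<noteq> {} \<longrightarrow> Max (A - B) < Min B) \<and>
     (\<forall>y z. succ_in ((A - B) \<union> {Min B}) y z \<longrightarrow> holds_conj cs y z)"

lemma peels_to_insert_below:
  assumes C: "finite C" and B: "B \<noteq> {}" "B \<subseteq> C" and below: "\<forall>c\<in>C. m < c"
  shows "peels_to cs (Suc k) (insert m C) B \<longleftrightarrow> holds_conj cs m (Min C) \<and> peels_to cs k C B"
proof -
  have "finite B"
    using B C finite_subset by blast
  then have "Min B \<in> B"
    using B by simp
  then have m_less: "m < Min B" "m \<notin> C"
    using B below by auto
  then have diff: "insert m C - B = insert m (C - B)"
    using B by auto
  have card: "card (insert m C - B) = Suc (card (C - B))"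
    using diff C m_less by simp
  have Max: "(insert m C - B \<noteq> {} \<longrightarrow> Max (insert m C - B) < Min B) \<longleftrightarrow>
             (C - B \<noteq> {} \<longrightarrow> Max (C - B) < Min B)"
    using diff C m_less by auto
  have "succ_in ((insert m C - B) \<union> {Min B}) y z \<longleftrightarrow>
        (y = m \<and> z = Min C) \<or> succ_in ((C - B) \<union> {Min B}) y z" for y z
  proof -
    have "(insert m C - B) \<union> {Min B} = insert m ((C - B) \<union> {Min B})"
      using diff by auto
    moreover have "\<forall>t \<in> (C - B) \<union> {Min B}. m < t"
      using below m_less by auto
    ultimately show ?thesis
      using succ_in_insert_below[of "(C - B) \<union> {Min B}" m y z] Min_diff_union_Min[OF C B(2,1)] C
      by simp
  qed
  then show ?thesis
    unfolding peels_to_def using card Max B by auto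
qed

lemma peels_to_Suc_iff:
  assumes refl: "\<forall>x. holds_conj cs x x" and A: "finite A"
  shows "peels_to cs (Suc k) A B \<longleftrightarrow> (\<exists>C. peel_step cs A C \<and> peels_to cs k C B)"
proof
  assume P: "peels_to cs (Suc k) A B"
  show "\<exists>C. peel_step cs A C \<and> peels_to cs k C B"
  proof (cases "A = B")
    case True
    then have "A \<noteq> {}"
      using P by (simp add: peels_to_def)
    then have "peel_step cs A A \<and> peels_to cs k A A"
      using A refl by (auto simp: peel_step_def peels_to_def succ_in_def insert_absorb)
    then show ?thesis
      using True by blast
  next
    case False
    let ?m = "Min A" and ?C = "A - {Min A}"
    have B: "B \<noteq> {}" "B \<subseteq> A" and Max: "A - B \<noteq> {} \<longrightarrow> Max (A - B) < Min B"
      using P by (auto simp: peels_to_def)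
    have "?m \<notin> B"
    proof
      assume "?m \<in> B"
      obtain d where "d \<in> A - B"
        using False B by blast
      then have "?m \<le> d" "d \<le> Max (A - B)"
        using A by auto
      moreover have "Min B \<le> ?m"
        using \<open>?m \<in> B\<close> B A by (meson Min_le finite_subset)
      ultimately show False
        using Max \<open>d \<in> A - B\<close> by auto
    qed
    moreover have "?m \<in> A"
      using A B by (metis Min_in empty_iff subset_empty)
    ultimately have A_eq: "A = insert ?m ?C" and B_sub: "B \<subseteq> ?C"
      using B by auto
    moreover have "\<forall>c\<in>?C. ?m < c"
      using A by (simp add: order_less_le)
    ultimately have "holds_conj cs ?m (Min ?C) \<and> peels_to cs k ?C B"
      using peels_to_insert_below[of ?C B ?m cs k] A B P by simp
    moreover have "?C \<noteq> {}"
      using B B_sub by blast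
    ultimately have "peel_step cs A ?C \<and> peels_to cs k ?C B"
      using A_eq by (simp add: peel_step_def)
    then show ?thesis ..
  qed
next
  assume "\<exists>C. peel_step cs A C \<and> peels_to cs k C B"
  then obtain C where step: "peel_step cs A C" and P: "peels_to cs k C B"
    by blast
  show "peels_to cs (Suc k) A B"
  proof (cases "Min A \<in> C")
    case True
    then have "A = C"
      using step by (metis insert_absorb peel_step_def)
    then show ?thesis
      using P by (auto simp: peels_to_def)
  next
    case False
    have A_eq: "A = insert (Min A) C" and holds: "holds_conj cs (Min A) (Min C)"
      using step by (simp_all add: peel_step_def)
    have "finite C" "\<forall>c\<in>C. Min A < c"
      using A A_eq False by (metis finite_insert, metis Min_le insertCI order_less_le)
    moreover have "B \<noteq> {}" "B \<subseteq> C"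
      using P by (simp_all add: peels_to_def)
    ultimately show ?thesis
      using peels_to_insert_below[of C B "Min A" cs k] A_eq holds P by simp
  qed
qed

lemma peel_steps_iff_peels_to:
  assumes refl: "\<forall>x. holds_conj cs x x" and "finite A"
  shows "((\<lambda>u v. peel_step cs u v \<and> finite v) ^^ k) A B \<and> B \<noteq> {} \<longleftrightarrow> peels_to cs k A B"
  using assms(2)
proof (induction k arbitrary: A)
  case 0
  then show ?case
    by (auto simp: peels_to_def succ_in_def)
next
  case (Suc k)
  have finite_step: "finite C" if "peel_step cs A C" for C
    using that Suc.prems by (metis finite_insert peel_step_def)
  have "((\<lambda>u v. peel_step cs u v \<and> finite v) ^^ Suc k) A B \<and> B \<noteq> {} \<longleftrightarrow>
        (\<exists>C. peel_step cs A C \<and> finite C \<and>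
             ((\<lambda>u v. peel_step cs u v \<and> finite v) ^^ k) C B \<and> B \<noteq> {})"
    unfolding relpowp_Suc_left OO_def by blast
  also have "\<dots> \<longleftrightarrow> (\<exists>C. peel_step cs A C \<and> peels_to cs k C B)"
  proof (rule ex_cong1)
    fix C
    show "peel_step cs A C \<and> finite C \<and> ((\<lambda>u v. peel_step cs u v \<and> finite v) ^^ k) C B \<and> B \<noteq> {}
          \<longleftrightarrow> peel_step cs A C \<and> peels_to cs k C B"
      using Suc.IH[of C] finite_step[of C] by blast
  qed
  also have "\<dots> \<longleftrightarrow> peels_to cs (Suc k) A B"
    using peels_to_Suc_iff[OF refl Suc.prems] ..
  finally show ?case .
qed

theorem mainTheorem7:
  fixes cs :: "dconstr list" and n :: nat and S2 Sn :: "int set"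
  assumes sat: "\<exists>u v. holds_conj cs u v"
    and le: "\<forall>u v. holds_conj cs u v \<longrightarrow> u \<le> v"
    and refl: "\<forall>m. holds_conj cs m m"
    and n3: "n \<ge> 3"
    and fin2: "finite S2" and finn: "finite Sn"
  shows "(\<exists>S :: nat \<Rightarrow> int set.
            S 2 = S2 \<and> S n = Sn \<and> (\<forall>i\<in>{2..n}. finite (S i)) \<and>
            (\<forall>i\<in>{2..n-1}.
               (S i \<noteq> {} \<and> S i = S (Suc i) \<union> {Min (S i)}) \<and>
               (S i \<noteq> {} \<and> S (Suc i) \<noteq> {} \<and> Max (S i) = Max (S (Suc i))) \<and>
               (S i \<noteq> {} \<and> S (Suc i) \<noteq> {} \<and> holds_conj cs (Min (S i)) (Min (S (Suc i))))))
     \<longleftrightarrow>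
         (Sn \<noteq> {} \<and> Sn \<subseteq> S2 \<and> card (S2 - Sn) \<le> n - 2 \<and>
          (S2 - Sn \<noteq> {} \<longrightarrow> Max (S2 - Sn) < Min Sn) \<and>
          (\<forall>y z. succ_in ((S2 - Sn) \<union> {Min Sn}) y z \<longrightarrow> holds_conj cs y z))"
proof -
  define chain_step where "chain_step = (\<lambda>A C.
    (A \<noteq> {} \<and> A = C \<union> {Min A}) \<and> (A \<noteq> {} \<and> C \<noteq> {} \<and> Max A = Max C) \<and>
    (A \<noteq> {} \<and> C \<noteq> {} \<and> holds_conj cs (Min A) (Min C)))"
  define step where "step = (\<lambda>u v. peel_step cs u v \<and> finite v)"
  have step_eq: "(\<lambda>u v. chain_step u v \<and> finite v) = step"
    unfolding step_def chain_step_def using chain_condition_iff_peel_step by (intro ext) blast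
  have idx: "2 + (n - 2) = n" "{2..<n} = {2..n-1}"
    using n3 by auto
  note chain = chain_from_iff_relpowp[of 2 S2 "n - 2" Sn finite chain_step,
    unfolded idx step_eq, unfolded chain_step_def]
  have nonempty: "Sn \<noteq> {}" if "(step ^^ (n - 2)) S2 Sn"
  proof -
    have "n - 2 = Suc (n - 3)"
      using n3 by simp
    then show ?thesis
      using that by (auto elim: relpowp_Suc_E simp: step_def peel_step_def)
  qed
  have "finite S2 \<and> (step ^^ (n - 2)) S2 Sn \<longleftrightarrow> (step ^^ (n - 2)) S2 Sn \<and> Sn \<noteq> {}"
    using fin2 nonempty by blast
  also have "\<dots> \<longleftrightarrow> peels_to cs (n - 2) S2 Sn"
    unfolding step_def by (rule peel_steps_iff_peels_to[OF refl fin2])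
  finally show ?thesis
    unfolding chain peels_to_def .
qed

end
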